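(* For all $n,k\in\mathbb N$ and all $t\in(0,1)$, the matrix $A_{n,k,t}$ is a GKK matrix, i.e. a weakly sign-symmetric $P$-matrix.
   Context: For $x\in\mathbb R$, $x_+=\max\{x,0\}$. For $k\in\mathbb{N}$ and $t\in(0,1)$, $A_{\infty,k,t}=(A(i,j))_{i,j\ge1}$ is the infinite Toeplitz Hessenberg matrix with $A(i,j)=a_{j-i}$ for $j\ge i$, $A(i+1,i)=1$, and $A(i,j)=0$ for $i\ge j+2$, where $(a_0,a_1,\ldots)$ is the unique sequence for which the leading principal minors satisfy $\det A(\{1,\dots,n\})=t^{(n-k-1)_+}$ for all $n\in\mathbb N$. $A_{n,k,t}$ is the leading principal $n\times n$ submatrix of $A_{\infty,k,t}$. For $A\in\mathbb C^{n\times n}$ and $\alpha,\beta\subseteq\{1,\dots,n\}$ with $\#\alpha=\#\beta$, $A[\alpha,\beta]$ is the determinant of the submatrix with rows $\alpha$ and columns $\beta$, $A[\alpha]=A[\alpha,\alpha]$, $A[\emptyset]=1$. $A$ is a $P$-matrix if $A[\alpha]>0$ for all $\alpha\subseteq\{1,\dots,n\}$. $A$ is weakly sign-symmetric if $A[\alpha,\beta]A[\beta,\alpha]\ge0$ for all $\alpha,\beta$ with $\#\alpha=\#\beta=\#(\alpha\cup\beta)-1$. *)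

theory Defs
  imports "Jordan_Normal_Form.Determinant" "Jordan_Normal_Form.DL_Submatrix"
begin

text \<open>Matrices are Jordan_Normal_Form matrices with 0-based indices: row/column i
  of the paper corresponds to index i - 1 here.\<close>

definition toeplitz_hess :: "(nat \<Rightarrow> real) \<Rightarrow> nat \<Rightarrow> real mat" where
  "toeplitz_hess a n = mat n n (\<lambda>(i, j).
     if i \<le> j then a (j - i) else if i = Suc j then 1 else 0)"

text \<open>The unique sequence whose leading principal minors are t^((n-k-1)_+)
  (natural-number subtraction truncates at 0, giving the positive part).\<close>
definition seq_kt :: "nat \<Rightarrow> real \<Rightarrow> nat \<Rightarrow> real" where
  "seq_kt k t = (THE a. \<forall>n\<ge>1. det (toeplitz_hess a n) = t ^ (n - k - 1))"

definition A_nkt :: "nat \<Rightarrow> nat \<Rightarrow> real \<Rightarrow> real mat" where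
  "A_nkt n k t = toeplitz_hess (seq_kt k t) n"

text \<open>Minor A[alpha, beta]; the empty minor is det of a 0 x 0 matrix, i.e. 1.\<close>
definition minor :: "real mat \<Rightarrow> nat set \<Rightarrow> nat set \<Rightarrow> real" where
  "minor A \<alpha> \<beta> = det (submatrix A \<alpha> \<beta>)"

definition P_matrix :: "real mat \<Rightarrow> bool" where
  "P_matrix A \<longleftrightarrow> A \<in> carrier_mat (dim_row A) (dim_row A) \<and>
     (\<forall>\<alpha>. \<alpha> \<subseteq> {..<dim_row A} \<longrightarrow> minor A \<alpha> \<alpha> > 0)"

definition weakly_sign_symmetric :: "real mat \<Rightarrow> bool" where
  "weakly_sign_symmetric A \<longleftrightarrow> A \<in> carrier_mat (dim_row A) (dim_row A) \<and>
     (\<forall>\<alpha> \<beta>. \<alpha> \<subseteq> {..<dim_row A} \<longrightarrow> \<beta> \<subseteq> {..<dim_row A} \<longrightarrow>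
        card \<alpha> = card \<beta> \<longrightarrow> card (\<alpha> \<union> \<beta>) = card \<alpha> + 1 \<longrightarrow>
        minor A \<alpha> \<beta> * minor A \<beta> \<alpha> \<ge> 0)"

definition GKK_matrix :: "real mat \<Rightarrow> bool" where
  "GKK_matrix A \<longleftrightarrow> weakly_sign_symmetric A \<and> P_matrix A"

end

theory Submission
  imports Defs
begin

text \<open>A Toeplitz Hessenberg matrix vanishes below its subdiagonal. Hence a minor whose row and
  column sets both avoid an index \<open>g\<close> factors at \<open>g\<close> into the minors of the parts below and
  above \<open>g\<close>, and vanishes if the part below \<open>g\<close> has fewer rows than columns. Splitting at every
  gap makes each principal minor a product of leading principal minors
  \<open>d m = t ^ (m - k - 1) > 0\<close>. In a product \<open>A[S - {q}, S - {p}] * A[S - {p}, S - {q}]\<close> of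
  almost principal minors, one factor vanishes if an index between \<open>p\<close> and \<open>q\<close> is missing from
  \<open>S\<close>; otherwise both factors reduce to cofactors of a leading block \<open>A\<^sub>L\<close>. A closed form of the
  adjugate of a Toeplitz Hessenberg matrix shows that deleting row \<open>v\<close> and column \<open>u\<close> of \<open>A\<^sub>L\<close>
  leaves \<open>d v * d (L - 1 - u)\<close> if \<open>v < u\<close>, and \<open>d v * d (L - 1 - u) - d L * d (v - u - 1)\<close> if
  \<open>u < v\<close>, which is nonnegative because \<open>d\<close> is log-concave.\<close>

text \<open>The column list \<open>ys\<close> is meant to have the length of the row list \<open>xs\<close>.\<close>

definition list_minor :: "(nat \<Rightarrow> nat \<Rightarrow> 'a :: comm_ring_1) \<Rightarrow> nat list \<Rightarrow> nat list \<Rightarrow> 'a" where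
  "list_minor f xs ys = det (mat (length xs) (length xs) (\<lambda>(i, j). f (xs ! i) (ys ! j)))"

lemma list_minor_Nil: "list_minor f [] [] = 1"
  unfolding list_minor_def by (simp add: det_dim_zero)

lemma list_minor_append_block:
  fixes f :: "nat \<Rightarrow> nat \<Rightarrow> 'a :: idom"
  assumes len1: "length xs1 = length ys1" and len2: "length xs2 = length ys2"
    and zero: "\<And>x y. x \<in> set xs2 \<Longrightarrow> y \<in> set ys1 \<Longrightarrow> f x y = 0"
  shows "list_minor f (xs1 @ xs2) (ys1 @ ys2) = list_minor f xs1 ys1 * list_minor f xs2 ys2"
proof -
  let ?n1 = "length xs1" and ?n2 = "length xs2"
  let ?B = "four_block_mat (mat ?n1 ?n1 (\<lambda>(i, j). f (xs1 ! i) (ys1 ! j)))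
    (mat ?n1 ?n2 (\<lambda>(i, j). f (xs1 ! i) (ys2 ! j))) (0\<^sub>m ?n2 ?n1)
    (mat ?n2 ?n2 (\<lambda>(i, j). f (xs2 ! i) (ys2 ! j)))"
  have block: "mat (?n1 + ?n2) (?n1 + ?n2) (\<lambda>(i, j). f ((xs1 @ xs2) ! i) ((ys1 @ ys2) ! j)) = ?B"
  proof (rule eq_matI)
    fix i j assume "i < dim_row ?B" "j < dim_col ?B"
    moreover have "f (xs2 ! (i - ?n1)) (ys1 ! j) = 0" if "\<not> i < ?n1" "j < ?n1" "i < ?n1 + ?n2"
      using that len1 by (intro zero) auto
    ultimately show "mat (?n1 + ?n2) (?n1 + ?n2) (\<lambda>(i, j). f ((xs1 @ xs2) ! i) ((ys1 @ ys2) ! j))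
        $$ (i, j) = ?B $$ (i, j)"
      using len1 len2 by (auto simp: nth_append)
  qed auto
  show ?thesis
    unfolding list_minor_def length_append block by (rule det_four_block_mat_lower_left_zero) auto
qed

lemma list_minor_append_zero:
  assumes len: "length xs1 + length xs2 = length ys1 + length ys2"
    and more_cols: "length xs1 < length ys1"
    and zero: "\<And>x y. x \<in> set xs2 \<Longrightarrow> y \<in> set ys1 \<Longrightarrow> f x y = 0"
  shows "list_minor f (xs1 @ xs2) (ys1 @ ys2) = 0"
proof -
  let ?n = "length (xs1 @ xs2)" and ?n1 = "length xs1" and ?m1 = "length ys1"
  let ?M = "mat ?n ?n (\<lambda>(i, j). f ((xs1 @ xs2) ! i) ((ys1 @ ys2) ! j))"
  have "(\<Prod>i = 0..<?n. ?M $$ (i, p i)) = 0" if p: "p permutes {0..<?n}" for p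
  proof -
    \<comment> \<open>pigeonhole: \<open>p\<close> sends some row of \<open>xs2\<close> to a column of \<open>ys1\<close>\<close>
    have "\<not> p ` {?n1..<?n} \<subseteq> {?m1..<?n}"
    proof
      assume "p ` {?n1..<?n} \<subseteq> {?m1..<?n}"
      from card_inj_on_le[OF permutes_inj_on[OF p] this] show False
        using len more_cols by simp
    qed
    then obtain i where i: "i \<in> {?n1..<?n}" "p i \<notin> {?m1..<?n}"
      by blast
    moreover have "p i < ?n" using i permutes_in_image[OF p] by simp
    ultimately have i: "?n1 \<le> i" "i < ?n" "p i < ?m1" by auto
    then have "?M $$ (i, p i) = f (xs2 ! (i - ?n1)) (ys1 ! p i)"
      using len by (simp add: nth_append)
    also have "\<dots> = 0" using i by (intro zero) auto
    finally show ?thesis using i by (intro prod_zero) auto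
  qed
  then show ?thesis
    unfolding list_minor_def det_def'[OF mat_carrier] by simp
qed

lemma list_minor_shift:
  assumes "length ys = length xs" and "\<And>i j. f (i + s) (j + s) = f i j"
  shows "list_minor f (map (\<lambda>x. x + s) xs) (map (\<lambda>x. x + s) ys) = list_minor f xs ys"
  unfolding list_minor_def using assms by (intro arg_cong[where f = det] eq_matI) auto

section \<open>Determinants of Toeplitz Hessenberg matrices\<close>

definition hess_entry :: "(nat \<Rightarrow> real) \<Rightarrow> nat \<Rightarrow> nat \<Rightarrow> real" where
  "hess_entry a i j = (if i \<le> j then a (j - i) else if i = Suc j then 1 else 0)"

lemma toeplitz_hess_eq_mat: "toeplitz_hess a n = mat n n (\<lambda>(i, j). hess_entry a i j)"
  unfolding toeplitz_hess_def hess_entry_def by simp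

lemma toeplitz_hess_carrier: "toeplitz_hess a n \<in> carrier_mat n n"
  unfolding toeplitz_hess_def by simp

lemma hess_entry_below_subdiag: "Suc j < i \<Longrightarrow> hess_entry a i j = 0"
  unfolding hess_entry_def by simp

lemma hess_entry_shift: "hess_entry a (i + s) (j + s) = hess_entry a i j"
  unfolding hess_entry_def by auto

definition hess_det :: "(nat \<Rightarrow> real) \<Rightarrow> nat \<Rightarrow> real" where
  "hess_det a n = det (toeplitz_hess a n)"

lemma hess_det_0: "hess_det a 0 = 1"
  unfolding hess_det_def toeplitz_hess_def by (simp add: det_dim_zero)

lemma hess_det_eq_list_minor: "hess_det a n = list_minor (hess_entry a) [0..<n] [0..<n]"
  unfolding hess_det_def list_minor_def toeplitz_hess_eq_mat
  by (intro arg_cong[where f = det] eq_matI) auto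

definition upt_without :: "nat \<Rightarrow> nat \<Rightarrow> nat list" where
  "upt_without u n = [0..<u] @ [Suc u..<n]"

lemma length_upt_without: "u < n \<Longrightarrow> length (upt_without u n) = n - 1"
  unfolding upt_without_def by simp

lemma det_mat_delete_toeplitz_hess:
  assumes "r < n" "c < n"
  shows "det (mat_delete (toeplitz_hess a n) r c)
    = list_minor (hess_entry a) (upt_without r n) (upt_without c n)"
  unfolding list_minor_def using assms
  by (intro arg_cong[where f = det] eq_matI)
     (auto simp: mat_delete_def toeplitz_hess_eq_mat length_upt_without upt_without_def nth_append)

lemma list_minor_hess_entry_subdiag: "list_minor (hess_entry a) [Suc 0..<Suc j] [0..<j] = 1"
proof -
  let ?M = "mat j j (\<lambda>(i, c). hess_entry a ([Suc 0..<Suc j] ! i) ([0..<j] ! c))"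
  have "upper_triangular ?M"
    unfolding upper_triangular_def by (auto simp: hess_entry_def simp del: upt_Suc)
  then have "det ?M = prod_list (diag_mat ?M)"
    by (intro det_upper_triangular) auto
  also have "diag_mat ?M = replicate j 1"
    unfolding diag_mat_def by (auto simp: hess_entry_def simp del: upt_Suc intro: nth_equalityI)
  finally show ?thesis unfolding list_minor_def by (simp del: upt_Suc)
qed

lemma hess_det_Suc: "hess_det a (Suc n) = (\<Sum>j<Suc n. (-1) ^ j * a j * hess_det a (n - j))"
proof -
  let ?A = "toeplitz_hess a (Suc n)"
  have "hess_det a (Suc n) = (\<Sum>j<Suc n. ?A $$ (0, j) * cofactor ?A 0 j)"
    unfolding hess_det_def by (rule laplace_expansion_row[OF toeplitz_hess_carrier]) simp
  also have "\<dots> = (\<Sum>j<Suc n. (-1) ^ j * a j * hess_det a (n - j))"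
  proof (rule sum.cong[OF refl])
    fix j assume "j \<in> {..<Suc n}"
    then have j: "j \<le> n" by simp
    let ?tail = "map (\<lambda>x. x + Suc j) [0..<n - j]"
    have rows: "upt_without 0 (Suc n) = [Suc 0..<Suc j] @ ?tail"
      and cols: "upt_without j (Suc n) = [0..<j] @ ?tail"
      unfolding upt_without_def map_add_upt
      using j upt_add_eq_append[of "Suc 0" "Suc j" "n - j"] by (simp_all del: upt_Suc)
    \<comment> \<open>deleting row \<open>0\<close> and column \<open>j\<close> leaves a unit upper triangular block of size \<open>j\<close>
      and the leading block of size \<open>n - j\<close>\<close>
    have "det (mat_delete ?A 0 j)
        = list_minor (hess_entry a) [Suc 0..<Suc j] [0..<j] * list_minor (hess_entry a) ?tail ?tail"
      unfolding det_mat_delete_toeplitz_hess[OF zero_less_Suc le_imp_less_Suc[OF j]] rows cols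
      by (rule list_minor_append_block) (auto simp: hess_entry_below_subdiag simp del: upt_Suc)
    also have "\<dots> = hess_det a (n - j)"
      unfolding hess_det_eq_list_minor list_minor_hess_entry_subdiag
      by (subst list_minor_shift) (auto simp: hess_entry_def)
    finally have "det (mat_delete ?A 0 j) = hess_det a (n - j)" .
    moreover have "?A $$ (0, j) = a j"
      using j unfolding toeplitz_hess_def by simp
    ultimately show "?A $$ (0, j) * cofactor ?A 0 j = (-1) ^ j * a j * hess_det a (n - j)"
      unfolding cofactor_def by simp
  qed
  finally show ?thesis .
qed

lemma hess_det_Suc':
  "hess_det a (Suc m) = (\<Sum>j<m. (-1) ^ j * a j * hess_det a (m - j)) + (-1) ^ m * a m"
  by (simp add: hess_det_Suc hess_det_0)

text \<open>Solving \<open>hess_det_Suc'\<close> for the last coefficient yields the symbol with prescribed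
  leading principal minors \<open>D\<close>.\<close>

function hess_symbol :: "(nat \<Rightarrow> real) \<Rightarrow> nat \<Rightarrow> real" where
  "hess_symbol D m = (-1) ^ m * (D (Suc m) - (\<Sum>j<m. (-1) ^ j * hess_symbol D j * D (m - j)))"
  by auto
termination by (relation "measure snd") auto

declare hess_symbol.simps[simp del]

lemma hess_det_hess_symbol:
  assumes "D 0 = 1"
  shows "hess_det (hess_symbol D) n = D n"
proof (induction n rule: less_induct)
  case (less n)
  show ?case
  proof (cases n)
    case 0
    then show ?thesis using assms by (simp add: hess_det_0)
  next
    case (Suc m)
    let ?a = "hess_symbol D"
    have "(\<Sum>j<m. (-1) ^ j * ?a j * hess_det ?a (m - j)) = (\<Sum>j<m. (-1) ^ j * ?a j * D (m - j))"
      using less Suc by (intro sum.cong) auto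
    moreover have "(-1) ^ m * ?a m = D (Suc m) - (\<Sum>j<m. (-1) ^ j * ?a j * D (m - j))"
      by (subst hess_symbol.simps) simp
    ultimately show ?thesis
      unfolding Suc hess_det_Suc' by simp
  qed
qed

lemma symbol_eq_if_hess_det_eq:
  assumes "\<And>n. n \<ge> 1 \<Longrightarrow> hess_det a n = hess_det b n"
  shows "a = b"
proof
  have det_eq: "hess_det a n = hess_det b n" for n
    using assms[of n] by (cases n) (auto simp: hess_det_0)
  fix m
  show "a m = b m"
  proof (induction m rule: less_induct)
    case (less m)
    have "(\<Sum>j<m. (-1) ^ j * a j * hess_det a (m - j)) = (\<Sum>j<m. (-1) ^ j * b j * hess_det b (m - j))"
      using less det_eq by (intro sum.cong) auto
    then have "(-1) ^ m * a m = (-1) ^ m * b m"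
      using det_eq[of "Suc m"] unfolding hess_det_Suc' by simp
    then show ?case by simp
  qed
qed

lemma seq_kt_eq_hess_symbol: "seq_kt k t = hess_symbol (\<lambda>n. t ^ (n - k - 1))"
  unfolding seq_kt_def
proof (rule the_equality)
  show "\<forall>n\<ge>1. det (toeplitz_hess (hess_symbol (\<lambda>n. t ^ (n - k - 1))) n) = t ^ (n - k - 1)"
    using hess_det_hess_symbol[of "\<lambda>n. t ^ (n - k - 1)"] unfolding hess_det_def by simp
  fix a assume "\<forall>n\<ge>1. det (toeplitz_hess a n) = t ^ (n - k - 1)"
  then show "a = hess_symbol (\<lambda>n. t ^ (n - k - 1))"
    using hess_det_hess_symbol[of "\<lambda>n. t ^ (n - k - 1)"]
    by (intro symbol_eq_if_hess_det_eq) (simp add: hess_det_def)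
qed

lemma hess_det_seq_kt: "hess_det (seq_kt k t) n = t ^ (n - k - 1)"
  unfolding seq_kt_eq_hess_symbol by (simp add: hess_det_hess_symbol)

section \<open>The adjugate of a Toeplitz Hessenberg matrix\<close>

definition signed_hess_det :: "(nat \<Rightarrow> real) \<Rightarrow> nat \<Rightarrow> real" where
  "signed_hess_det a n = (-1) ^ n * hess_det a n"

lemma signed_hess_det_0: "signed_hess_det a 0 = 1"
  unfolding signed_hess_det_def by (simp add: hess_det_0)

text \<open>The signed determinants are the coefficients of the power series \<open>1 / (1 + x a(x))\<close>.\<close>

lemma signed_hess_det_Suc:
  "signed_hess_det a (Suc n) = - (\<Sum>m<Suc n. signed_hess_det a m * a (n - m))"
proof -
  have "(\<Sum>m<Suc n. signed_hess_det a m * a (n - m)) = (\<Sum>j<Suc n. signed_hess_det a (n - j) * a j)"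
    using sum.nat_diff_reindex[of "\<lambda>m. signed_hess_det a m * a (n - m)" "Suc n"] by simp
  also have "\<dots> = (\<Sum>j<Suc n. - ((-1) ^ Suc n * ((-1) ^ j * a j * hess_det a (n - j))))"
  proof (rule sum.cong[OF refl])
    fix j assume "j \<in> {..<Suc n}"
    then have "(-1::real) ^ Suc n * (-1) ^ j = - ((-1) ^ (n - j))"
      by (auto simp: minus_one_power_iff)
    then show "signed_hess_det a (n - j) * a j
        = - ((-1) ^ Suc n * ((-1) ^ j * a j * hess_det a (n - j)))"
      unfolding signed_hess_det_def by (simp add: algebra_simps)
  qed
  finally show ?thesis
    unfolding signed_hess_det_def hess_det_Suc sum_distrib_left sum_negf by simp
qed

lemma signed_hess_det_row_combination:
  assumes j: "j < L"
  shows "(\<Sum>m = 0..<L. signed_hess_det a m * hess_entry a m j)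
    = (if j = L - 1 then - signed_hess_det a L else 0)"
proof -
  have "(\<Sum>m = 0..<L. signed_hess_det a m * hess_entry a m j)
      = (\<Sum>m = 0..<Suc j. signed_hess_det a m * hess_entry a m j)
        + (\<Sum>m = Suc j..<L. signed_hess_det a m * hess_entry a m j)"
    using j by (intro sum.atLeastLessThan_concat[symmetric]) auto
  also have "(\<Sum>m = 0..<Suc j. signed_hess_det a m * hess_entry a m j) = - signed_hess_det a (Suc j)"
    unfolding signed_hess_det_Suc atLeast0LessThan by (auto simp: hess_entry_def intro: sum.cong)
  also have "(\<Sum>m = Suc j..<L. signed_hess_det a m * hess_entry a m j)
      = (if Suc j < L then signed_hess_det a (Suc j) else 0)"
  proof (cases "Suc j < L")
    case True
    then have "(\<Sum>m = Suc j..<L. signed_hess_det a m * hess_entry a m j)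
        = signed_hess_det a (Suc j) * hess_entry a (Suc j) j
          + (\<Sum>m = Suc (Suc j)..<L. signed_hess_det a m * hess_entry a m j)"
      by (rule sum.atLeast_Suc_lessThan)
    then show ?thesis
      using True by (simp add: hess_entry_below_subdiag) (simp add: hess_entry_def)
  qed simp
  finally show ?thesis using j by auto
qed

lemma shifted_signed_hess_det_row_combination:
  assumes i: "i < L" and j: "j < L"
  shows "(\<Sum>m = 0..<L. (if i < m then signed_hess_det a (m - Suc i) else 0) * hess_entry a m j)
    = (if j = i then 1 else 0) - (if j = L - 1 then signed_hess_det a (L - 1 - i) else 0)"
proof -
  let ?f = "\<lambda>m. (if i < m then signed_hess_det a (m - Suc i) else 0) * hess_entry a m j"
  have "sum ?f {0..<L} = sum ?f {0..<Suc i} + sum ?f {Suc i..<L}"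
    using i by (intro sum.atLeastLessThan_concat[symmetric]) auto
  also have "\<dots> = (\<Sum>m = Suc i..<L. signed_hess_det a (m - Suc i) * hess_entry a m j)"
    by simp
  also have "\<dots> = (\<Sum>r = 0..<L - Suc i. signed_hess_det a r * hess_entry a (r + Suc i) j)"
    using i sum.shift_bounds_nat_ivl[of "\<lambda>m. signed_hess_det a (m - Suc i) * hess_entry a m j"
        0 "Suc i" "L - Suc i"]
    by simp
  also have "\<dots>
      = (if j = i then 1 else 0) - (if j = L - 1 then signed_hess_det a (L - 1 - i) else 0)"
  proof (cases "j \<le> i")
    case True
    then have "(\<Sum>r = 0..<L - Suc i. signed_hess_det a r * hess_entry a (r + Suc i) j)
        = (\<Sum>r = 0..<L - Suc i. if r = 0 \<and> j = i then 1 else 0)"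
      by (intro sum.cong) (auto simp: hess_entry_def signed_hess_det_0)
    then show ?thesis using True i j by (auto simp: signed_hess_det_0)
  next
    case False
    have "(\<Sum>r = 0..<L - Suc i. signed_hess_det a r * hess_entry a (r + Suc i) j)
        = (\<Sum>r = 0..<L - Suc i. signed_hess_det a r * hess_entry a r (j - Suc i))"
      using False hess_entry_shift[of a _ "Suc i" "j - Suc i"] by (intro sum.cong) auto
    also have "\<dots> = (if j - Suc i = L - Suc i - 1 then - signed_hess_det a (L - Suc i) else 0)"
      using False j by (intro signed_hess_det_row_combination) auto
    finally show ?thesis using False j by auto
  qed
  finally show ?thesis .
qed

text \<open>Closed form of the adjugate: a rank one matrix plus the determinant times a strictly upper
  triangular Toeplitz matrix; it is verified through \<open>X * A = det A \<cdot> 1\<close>.\<close>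

definition hess_adj_entry :: "(nat \<Rightarrow> real) \<Rightarrow> nat \<Rightarrow> nat \<Rightarrow> nat \<Rightarrow> real" where
  "hess_adj_entry a L i m = (-1) ^ (L - 1) * signed_hess_det a (L - 1 - i) * signed_hess_det a m
     + hess_det a L * (if i < m then signed_hess_det a (m - Suc i) else 0)"

lemma hess_adj_entry_mult:
  assumes i: "i < L" and j: "j < L"
  shows "(\<Sum>m = 0..<L. hess_adj_entry a L i m * hess_entry a m j)
    = (if i = j then hess_det a L else 0)"
proof -
  have last: "(-1) ^ (L - 1) * - signed_hess_det a L = hess_det a L"
    using i by (cases L) (auto simp: signed_hess_det_def)
  have "(\<Sum>m = 0..<L. hess_adj_entry a L i m * hess_entry a m j)
      = (-1) ^ (L - 1) * signed_hess_det a (L - 1 - i)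
          * (\<Sum>m = 0..<L. signed_hess_det a m * hess_entry a m j)
        + hess_det a L
          * (\<Sum>m = 0..<L. (if i < m then signed_hess_det a (m - Suc i) else 0) * hess_entry a m j)"
    unfolding hess_adj_entry_def sum_distrib_left sum.distrib[symmetric]
    by (rule sum.cong[OF refl]) (simp add: algebra_simps)
  also have "\<dots> = (if i = j then hess_det a L else 0)"
    unfolding signed_hess_det_row_combination[OF j] shifted_signed_hess_det_row_combination[OF i j]
    by (cases "j = L - 1"; cases "i = j") (auto simp: algebra_simps last[symmetric])
  finally show ?thesis .
qed

lemma adj_mat_toeplitz_hess:
  assumes D: "hess_det a L \<noteq> 0" and u: "u < L" and v: "v < L"
  shows "adj_mat (toeplitz_hess a L) $$ (u, v) = hess_adj_entry a L u v"
proof -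
  let ?A = "toeplitz_hess a L" and ?D = "hess_det a L"
  let ?X = "mat L L (\<lambda>(i, j). hess_adj_entry a L i j)"
  have A: "?A \<in> carrier_mat L L" by (rule toeplitz_hess_carrier)
  have adj: "adj_mat ?A \<in> carrier_mat L L" by (rule adj_mat(1)[OF A])
  have XA: "?X * ?A = ?D \<cdot>\<^sub>m 1\<^sub>m L"
  proof (rule eq_matI)
    fix i j assume "i < dim_row (?D \<cdot>\<^sub>m 1\<^sub>m L)" "j < dim_col (?D \<cdot>\<^sub>m 1\<^sub>m L)"
    then have ij: "i < L" "j < L" by auto
    then show "(?X * ?A) $$ (i, j) = (?D \<cdot>\<^sub>m 1\<^sub>m L) $$ (i, j)"
      using hess_adj_entry_mult[OF ij]
      unfolding toeplitz_hess_eq_mat by (simp add: scalar_prod_def)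
  qed (simp_all add: toeplitz_hess_def)
  have "?D \<cdot>\<^sub>m adj_mat ?A = (?X * ?A) * adj_mat ?A"
    unfolding XA mult_smult_assoc_mat[OF one_carrier_mat adj] left_mult_one_mat[OF adj] ..
  also have "\<dots> = ?X * (?A * adj_mat ?A)"
    using A adj by (intro assoc_mult_mat) auto
  also have "\<dots> = ?D \<cdot>\<^sub>m ?X"
    unfolding adj_mat(2)[OF A] hess_det_def[symmetric]
      mult_smult_distrib[OF mat_carrier one_carrier_mat] right_mult_one_mat[OF mat_carrier] ..
  finally have "(?D \<cdot>\<^sub>m adj_mat ?A) $$ (u, v) = (?D \<cdot>\<^sub>m ?X) $$ (u, v)" by simp
  then show ?thesis using D u v adj by simp
qed

lemma list_minor_upt_without_adj:
  assumes "hess_det a L \<noteq> 0" and "u < L" and "v < L"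
  shows "list_minor (hess_entry a) (upt_without v L) (upt_without u L)
    = (-1) ^ (u + v) * hess_adj_entry a L u v"
proof -
  have "adj_mat (toeplitz_hess a L) $$ (u, v) = cofactor (toeplitz_hess a L) v u"
    using assms unfolding adj_mat_def by (simp add: toeplitz_hess_def)
  then have "hess_adj_entry a L u v
      = (-1) ^ (u + v) * list_minor (hess_entry a) (upt_without v L) (upt_without u L)"
    using assms unfolding cofactor_def
    by (simp add: adj_mat_toeplitz_hess det_mat_delete_toeplitz_hess add.commute)
  then show ?thesis by simp
qed

lemma list_minor_upt_without_less:
  assumes D: "hess_det a L \<noteq> 0" and uv: "u < v" and v: "v < L"
  shows "list_minor (hess_entry a) (upt_without v L) (upt_without u L)
    = hess_det a v * hess_det a (L - 1 - u) - hess_det a L * hess_det a (v - Suc u)"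
proof -
  define r where "r = L - 1 - u"
  define s where "s = v - Suc u"
  have r: "L - 1 = u + r" and s: "v = Suc u + s"
    using uv v unfolding r_def s_def by auto
  have "list_minor (hess_entry a) (upt_without v L) (upt_without u L)
      = (-1) ^ (u + v) * hess_adj_entry a L u v"
    using D uv v by (intro list_minor_upt_without_adj) auto
  also have "\<dots> = hess_det a v * hess_det a (L - 1 - u) - hess_det a L * hess_det a (v - Suc u)"
    unfolding hess_adj_entry_def signed_hess_det_def r s
    by (simp add: algebra_simps minus_one_power_iff)
  finally show ?thesis .
qed

lemma list_minor_upt_without_greater:
  assumes D: "hess_det a L \<noteq> 0" and vu: "v < u" and u: "u < L"
  shows "list_minor (hess_entry a) (upt_without v L) (upt_without u L)
    = hess_det a v * hess_det a (L - 1 - u)"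
proof -
  define r where "r = L - 1 - u"
  have r: "L - 1 = u + r"
    using u unfolding r_def by auto
  have "list_minor (hess_entry a) (upt_without v L) (upt_without u L)
      = (-1) ^ (u + v) * hess_adj_entry a L u v"
    using D vu u by (intro list_minor_upt_without_adj) auto
  also have "\<dots> = hess_det a v * hess_det a (L - 1 - u)"
    unfolding hess_adj_entry_def signed_hess_det_def r
    using vu by (simp add: algebra_simps minus_one_power_iff)
  finally show ?thesis .
qed

lemma sorted_list_of_set_eqI:
  assumes "sorted_wrt (<) xs" and "set xs = A"
  shows "sorted_list_of_set A = xs"
  using strict_sorted_equal[OF assms(1) sorted_list_of_set.strict_sorted_key_list_of_set] assms(2)
  by auto

lemma sorted_list_of_set_Un:
  assumes "finite A" "finite B" "\<And>x y. x \<in> A \<Longrightarrow> y \<in> B \<Longrightarrow> x < y"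
  shows "sorted_list_of_set (A \<union> B) = sorted_list_of_set A @ sorted_list_of_set B"
  using assms by (intro sorted_list_of_set_eqI) (auto simp: sorted_wrt_append)

lemma sorted_list_of_set_eq_map_pick:
  assumes "finite S"
  shows "sorted_list_of_set S = map (pick S) [0..<card S]"
proof (rule sorted_list_of_set_eqI)
  show sorted: "sorted_wrt (<) (map (pick S) [0..<card S])"
    by (auto simp: sorted_wrt_iff_nth_less pick_mono_le)
  have "set (map (pick S) [0..<card S]) \<subseteq> S"
    by (auto intro: pick_in_set_le)
  moreover have "card (set (map (pick S) [0..<card S])) = card S"
    using sorted distinct_card[of "map (pick S) [0..<card S]"] by (simp add: strict_sorted_iff)
  ultimately show "set (map (pick S) [0..<card S]) = S"
    using assms by (simp add: card_subset_eq)
qed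

definition set_minor :: "(nat \<Rightarrow> nat \<Rightarrow> 'a :: comm_ring_1) \<Rightarrow> nat set \<Rightarrow> nat set \<Rightarrow> 'a" where
  "set_minor f I J = list_minor f (sorted_list_of_set I) (sorted_list_of_set J)"

lemma minor_toeplitz_hess_eq_set_minor:
  assumes I: "I \<subseteq> {..<n}" and J: "J \<subseteq> {..<n}" and card: "card I = card J"
  shows "minor (toeplitz_hess a n) I J = set_minor (hess_entry a) I J"
proof -
  have fin: "finite I" "finite J" using I J finite_subset by auto
  have "{i. i < n \<and> i \<in> I} = I" "{j. j < n \<and> j \<in> J} = J" using I J by auto
  moreover have "pick I i < n" "pick J i < n" if "i < card I" for i
    using that card pick_in_set_le I J by fastforce+
  ultimately show ?thesis
    unfolding minor_def submatrix_def set_minor_def list_minor_def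
      sorted_list_of_set_eq_map_pick[OF fin(1)] sorted_list_of_set_eq_map_pick[OF fin(2)]
    using card by (intro arg_cong[where f = det] eq_matI) (auto simp: toeplitz_hess_eq_mat)
qed

lemma set_minor_hess_split:
  assumes fin: "finite I" "finite J" and card: "card I = card J" and g: "g \<notin> I" "g \<notin> J"
  shows "card {x \<in> I. x < g} = card {y \<in> J. y < g} \<Longrightarrow> set_minor (hess_entry a) I J
      = set_minor (hess_entry a) {x \<in> I. x < g} {y \<in> J. y < g}
        * set_minor (hess_entry a) {x \<in> I. g < x} {y \<in> J. g < y}"
    and "card {x \<in> I. x < g} < card {y \<in> J. y < g} \<Longrightarrow> set_minor (hess_entry a) I J = 0"
proof -
  have split: "X = {x \<in> X. x < g} \<union> {x \<in> X. g < x}" if "g \<notin> X" for X :: "nat set"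
    using that by (auto simp: not_less_iff_gr_or_eq)
  have sorted_split: "sorted_list_of_set X
      = sorted_list_of_set {x \<in> X. x < g} @ sorted_list_of_set {x \<in> X. g < x}"
    if "finite X" "g \<notin> X" for X
    using that by (subst split[OF that(2)], intro sorted_list_of_set_Un) auto
  have card_split: "card X = card {x \<in> X. x < g} + card {x \<in> X. g < x}"
    if "finite X" "g \<notin> X" for X
    using that by (subst split[OF that(2)], intro card_Un_disjoint) auto
  have zero: "hess_entry a x y = 0"
    if "x \<in> set (sorted_list_of_set {x \<in> I. g < x})" "y \<in> set (sorted_list_of_set {y \<in> J. y < g})"
    for x y
    using that fin by (intro hess_entry_below_subdiag) auto
  show "set_minor (hess_entry a) I J
      = set_minor (hess_entry a) {x \<in> I. x < g} {y \<in> J. y < g}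
        * set_minor (hess_entry a) {x \<in> I. g < x} {y \<in> J. g < y}"
    if "card {x \<in> I. x < g} = card {y \<in> J. y < g}"
    unfolding set_minor_def sorted_split[OF fin(1) g(1)] sorted_split[OF fin(2) g(2)]
    using that card card_split[OF fin(1) g(1)] card_split[OF fin(2) g(2)] zero
    by (intro list_minor_append_block) auto
  show "set_minor (hess_entry a) I J = 0" if "card {x \<in> I. x < g} < card {y \<in> J. y < g}"
    unfolding set_minor_def sorted_split[OF fin(1) g(1)] sorted_split[OF fin(2) g(2)]
    using that card card_split[OF fin(1) g(1)] card_split[OF fin(2) g(2)] zero
    by (intro list_minor_append_zero) auto
qed

lemma set_minor_hess_interval: "set_minor (hess_entry a) {m..<m + L} {m..<m + L} = hess_det a L"
  unfolding set_minor_def hess_det_eq_list_minor sorted_list_of_set_range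
  using list_minor_shift[of "[0..<L]" "[0..<L]" "hess_entry a" m]
  by (simp add: hess_entry_shift map_add_upt add.commute)

lemma set_minor_hess_interval_delete:
  assumes "u < L" "v < L"
  shows "set_minor (hess_entry a) ({m..<m + L} - {m + v}) ({m..<m + L} - {m + u})
    = list_minor (hess_entry a) (upt_without v L) (upt_without u L)"
proof -
  have "sorted_list_of_set ({m..<m + L} - {m + w}) = map (\<lambda>x. x + m) (upt_without w L)"
    if "w < L" for w
  proof (rule sorted_list_of_set_eqI)
    show "sorted_wrt (<) (map (\<lambda>x. x + m) (upt_without w L))"
      by (auto simp: upt_without_def sorted_wrt_append sorted_wrt_map)
    show "set (map (\<lambda>x. x + m) (upt_without w L)) = {m..<m + L} - {m + w}"
      using that by (auto simp: upt_without_def image_add_atLeastLessThan)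
  qed
  then show ?thesis
    unfolding set_minor_def using assms
    by (simp add: list_minor_shift hess_entry_shift length_upt_without)
qed

section \<open>Principal and almost principal minors\<close>

lemma finite_nat_set_interval_or_gap:
  fixes S :: "nat set"
  assumes "finite S" "S \<noteq> {}"
  obtains m L where "S = {m..<m + L}"
    | g x y where "g \<notin> S" "x \<in> S" "y \<in> S" "x < g" "g < y"
proof (cases "\<exists>g. g \<notin> S \<and> Min S < g \<and> g < Max S")
  case True
  with that(2) Min_in Max_in assms show ?thesis by blast
next
  case False
  have "S = {Min S..Max S}"
  proof
    show "S \<subseteq> {Min S..Max S}" using assms by auto
    show "{Min S..Max S} \<subseteq> S"
    proof
      fix z assume z: "z \<in> {Min S..Max S}"
      show "z \<in> S"
      proof (rule ccontr)
        assume "z \<notin> S"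
        then have "z \<noteq> Min S" "z \<noteq> Max S"
          using Min_in[OF assms] Max_in[OF assms] by auto
        then have "Min S < z" "z < Max S" using z by auto
        with \<open>z \<notin> S\<close> False show False by blast
      qed
    qed
  qed
  also have "\<dots> = {Min S..<Min S + (Suc (Max S) - Min S)}"
    using Min_le[OF assms(1) Max_in[OF assms]] by auto
  finally show ?thesis by (rule that(1))
qed

lemma card_below_above_less:
  fixes S :: "nat set"
  assumes fin: "finite S" and "x \<in> S" "y \<in> S" "x < g" "g < y"
  shows "card {z \<in> S. z < g} < card S" and "card {z \<in> S. g < z} < card S"
proof -
  have "y \<notin> {z \<in> S. z < g}" and "x \<notin> {z \<in> S. g < z}"
    using assms by auto
  then have "{z \<in> S. z < g} \<subset> S" and "{z \<in> S. g < z} \<subset> S"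
    using assms by blast+
  then show "card {z \<in> S. z < g} < card S" and "card {z \<in> S. g < z} < card S"
    using psubset_card_mono[OF fin] by auto
qed

lemma set_minor_hess_principal_pos:
  assumes pos: "\<And>m. hess_det a m > 0"
  shows "finite S \<Longrightarrow> set_minor (hess_entry a) S S > 0"
proof (induction "card S" arbitrary: S rule: less_induct)
  case less
  show ?case
  proof (cases "S = {}")
    case True
    then show ?thesis by (simp add: set_minor_def list_minor_Nil)
  next
    case False
    from less.prems False show ?thesis
    proof (cases rule: finite_nat_set_interval_or_gap)
      case (1 m L)
      then show ?thesis by (simp add: set_minor_hess_interval pos)
    next
      case (2 g x y)
      let ?S1 = "{z \<in> S. z < g}" and ?S2 = "{z \<in> S. g < z}"
      have "set_minor (hess_entry a) S S
          = set_minor (hess_entry a) ?S1 ?S1 * set_minor (hess_entry a) ?S2 ?S2"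
        using less.prems 2(1) by (intro set_minor_hess_split(1)) auto
      moreover have "set_minor (hess_entry a) ?S1 ?S1 > 0" "set_minor (hess_entry a) ?S2 ?S2 > 0"
        using less.hyps[OF card_below_above_less(1)[OF less.prems 2(2-5)]]
          less.hyps[OF card_below_above_less(2)[OF less.prems 2(2-5)]] less.prems by auto
      ultimately show ?thesis by simp
    qed
  qed
qed

lemma set_minor_hess_delete_split_below:
  assumes fin: "finite S" and pq: "p \<in> S" "q \<in> S" and g: "g \<notin> S" "g < p" "g < q"
  shows "set_minor (hess_entry a) (S - {q}) (S - {p})
    = set_minor (hess_entry a) {z \<in> S. z < g} {z \<in> S. z < g}
      * set_minor (hess_entry a) ({z \<in> S. g < z} - {q}) ({z \<in> S. g < z} - {p})"
proof -
  have "{z \<in> S - {q}. z < g} = {z \<in> S. z < g}" "{z \<in> S - {p}. z < g} = {z \<in> S. z < g}"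
    and "{z \<in> S - {q}. g < z} = {z \<in> S. g < z} - {q}"
      "{z \<in> S - {p}. g < z} = {z \<in> S. g < z} - {p}"
    using g by auto
  then show ?thesis
    using set_minor_hess_split(1)[of "S - {q}" "S - {p}" g a] fin pq g(1) by simp
qed

lemma set_minor_hess_delete_split_above:
  assumes fin: "finite S" and pq: "p \<in> S" "q \<in> S" and g: "g \<notin> S" "p < g" "q < g"
  shows "set_minor (hess_entry a) (S - {q}) (S - {p})
    = set_minor (hess_entry a) ({z \<in> S. z < g} - {q}) ({z \<in> S. z < g} - {p})
      * set_minor (hess_entry a) {z \<in> S. g < z} {z \<in> S. g < z}"
proof -
  have "{z \<in> S - {q}. z < g} = {z \<in> S. z < g} - {q}"
      "{z \<in> S - {p}. z < g} = {z \<in> S. z < g} - {p}"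
    and "{z \<in> S - {q}. g < z} = {z \<in> S. g < z}" "{z \<in> S - {p}. g < z} = {z \<in> S. g < z}"
    using g by auto
  then show ?thesis
    using set_minor_hess_split(1)[of "S - {q}" "S - {p}" g a] fin pq g by simp
qed

lemma set_minor_hess_delete_across_gap:
  assumes fin: "finite S" and pq: "p \<in> S" "q \<in> S" and g: "g \<notin> S" "p < g" "g < q"
  shows "set_minor (hess_entry a) (S - {p}) (S - {q}) = 0"
proof (rule set_minor_hess_split(2)[where g = g])
  have "{z \<in> S - {p}. z < g} = {z \<in> S. z < g} - {p}"
    and "{z \<in> S - {q}. z < g} = {z \<in> S. z < g}"
    using g by auto
  moreover have "card ({z \<in> S. z < g} - {p}) < card {z \<in> S. z < g}"
    using fin pq g by (intro card_Diff1_less) auto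
  ultimately show "card {z \<in> S - {p}. z < g} < card {z \<in> S - {q}. z < g}"
    by simp
qed (use fin pq g in auto)

lemma card_Un_eq_Suc_obtains_delete:
  assumes "finite \<alpha>" "finite \<beta>" "card \<alpha> = card \<beta>" "card (\<alpha> \<union> \<beta>) = card \<alpha> + 1"
  obtains p q where "p \<noteq> q" "p \<in> \<alpha> \<union> \<beta>" "q \<in> \<alpha> \<union> \<beta>"
    "\<alpha> = (\<alpha> \<union> \<beta>) - {q}" "\<beta> = (\<alpha> \<union> \<beta>) - {p}"
proof -
  have "card (\<alpha> \<union> \<beta>) = card \<alpha> + card (\<beta> - \<alpha>)"
    using card_Un_disjoint[of \<alpha> "\<beta> - \<alpha>"] assms(1,2) by simp
  moreover have "card (\<alpha> \<union> \<beta>) = card \<beta> + card (\<alpha> - \<beta>)"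
    using card_Un_disjoint[of \<beta> "\<alpha> - \<beta>"] assms(1,2) by (simp add: Un_commute)
  ultimately have "card (\<alpha> - \<beta>) = 1" "card (\<beta> - \<alpha>) = 1" using assms(3,4) by simp_all
  then obtain p q where p: "\<alpha> - \<beta> = {p}" and q: "\<beta> - \<alpha> = {q}"
    by (metis card_1_singletonE)
  show ?thesis
  proof (rule that)
    show "p \<noteq> q" "p \<in> \<alpha> \<union> \<beta>" "q \<in> \<alpha> \<union> \<beta>" using p q by blast+
    show "\<alpha> = (\<alpha> \<union> \<beta>) - {q}" "\<beta> = (\<alpha> \<union> \<beta>) - {p}" using p q by blast+
  qed
qed

text \<open>The second assumption is a log-concavity inequality for the leading principal minors:
  \<open>L + (v - u - 1) = v + (L - 1 - u)\<close>, and \<open>L\<close> is the largest of these indices.\<close>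

locale gkk_symbol =
  fixes a :: "nat \<Rightarrow> real"
  assumes hess_det_pos: "\<And>m. hess_det a m > 0"
    and hess_det_cross: "\<And>L u v. u < v \<Longrightarrow> v < L \<Longrightarrow>
      hess_det a L * hess_det a (v - Suc u) \<le> hess_det a v * hess_det a (L - 1 - u)"
begin

lemma list_minor_upt_without_nonneg:
  assumes uv: "u < L" "v < L" "u \<noteq> v"
  shows "list_minor (hess_entry a) (upt_without v L) (upt_without u L) \<ge> 0"
proof (cases "u < v")
  case True
  then show ?thesis
    using hess_det_cross[OF True uv(2)] hess_det_pos[of L]
    by (simp add: list_minor_upt_without_less uv(2))
next
  case False
  with uv(3) have "v < u" by simp
  then show ?thesis
    using hess_det_pos[of L] hess_det_pos[of v] hess_det_pos[of "L - 1 - u"]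
    by (simp add: list_minor_upt_without_greater uv(1))
qed

lemma set_minor_hess_almost_principal_nonneg:
  "finite S \<Longrightarrow> p \<noteq> q \<Longrightarrow> {min p q..max p q} \<subseteq> S \<Longrightarrow>
    set_minor (hess_entry a) (S - {q}) (S - {p}) \<ge> 0"
proof (induction "card S" arbitrary: S rule: less_induct)
  case less
  then have pq: "p \<in> S" "q \<in> S" by (auto simp: min_def max_def split: if_splits)
  then have "S \<noteq> {}" by auto
  with less.prems(1) show ?case
  proof (cases rule: finite_nat_set_interval_or_gap)
    case (1 m L)
    then have "p = m + (p - m)" "q = m + (q - m)" "p - m < L" "q - m < L"
      using pq by auto
    then show ?thesis
      using list_minor_upt_without_nonneg[of "p - m" L "q - m"] less.prems(2)
        set_minor_hess_interval_delete[of "p - m" L "q - m" a m]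
      unfolding 1 by (metis diff_add_inverse)
  next
    case (2 g x y)
    let ?S1 = "{z \<in> S. z < g}" and ?S2 = "{z \<in> S. g < z}"
    have fin: "finite ?S1" "finite ?S2" using less.prems(1) by auto
    from 2(1) less.prems(3) have "g < min p q \<or> max p q < g"
      by (metis atLeastAtMost_iff not_less subsetD)
    then show ?thesis
    proof
      assume "g < min p q"
      then have "set_minor (hess_entry a) (?S2 - {q}) (?S2 - {p}) \<ge> 0"
        using less.prems(2,3) fin(2)
        by (intro less.hyps[OF card_below_above_less(2)[OF less.prems(1) 2(2-5)]]) auto
      with \<open>g < min p q\<close> show ?thesis
        using set_minor_hess_delete_split_below[OF less.prems(1) pq 2(1)]
          set_minor_hess_principal_pos[OF hess_det_pos fin(1)] by simp
    next
      assume "max p q < g"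
      then have "set_minor (hess_entry a) (?S1 - {q}) (?S1 - {p}) \<ge> 0"
        using less.prems(2,3) fin(1)
        by (intro less.hyps[OF card_below_above_less(1)[OF less.prems(1) 2(2-5)]]) auto
      with \<open>max p q < g\<close> show ?thesis
        using set_minor_hess_delete_split_above[OF less.prems(1) pq 2(1)]
          set_minor_hess_principal_pos[OF hess_det_pos fin(2)] by simp
    qed
  qed
qed

lemma set_minor_hess_almost_principal_pair_nonneg:
  assumes fin: "finite S" and pq: "p \<in> S" "q \<in> S" "p \<noteq> q"
  shows "set_minor (hess_entry a) (S - {q}) (S - {p}) * set_minor (hess_entry a) (S - {p}) (S - {q})
    \<ge> 0"
proof (cases "{min p q..max p q} \<subseteq> S")
  case True
  then show ?thesis
    using set_minor_hess_almost_principal_nonneg[OF fin pq(3)]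
      set_minor_hess_almost_principal_nonneg[OF fin pq(3)[symmetric]]
    by (simp add: min.commute max.commute)
next
  case False
  then obtain g where g: "g \<in> {min p q..max p q}" "g \<notin> S" by blast
  moreover have "min p q \<in> S" "max p q \<in> S"
    using pq by (simp_all add: min_def max_def)
  ultimately have gap: "min p q < g" "g < max p q"
    by (auto simp: order.order_iff_strict)
  show ?thesis
  proof (cases "p < q")
    case True
    with gap g(2) have "set_minor (hess_entry a) (S - {p}) (S - {q}) = 0"
      by (intro set_minor_hess_delete_across_gap[OF fin pq(1,2)]) auto
    then show ?thesis by simp
  next
    case False
    with gap g(2) have "set_minor (hess_entry a) (S - {q}) (S - {p}) = 0"
      by (intro set_minor_hess_delete_across_gap[OF fin pq(2,1)]) auto
    then show ?thesis by simp
  qed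
qed

lemma GKK_matrix_toeplitz_hess: "GKK_matrix (toeplitz_hess a n)"
proof -
  have dim: "dim_row (toeplitz_hess a n) = n" by (simp add: toeplitz_hess_def)
  have fin: "finite \<alpha>" if "\<alpha> \<subseteq> {..<n}" for \<alpha> :: "nat set"
    using that finite_subset by blast
  have "minor (toeplitz_hess a n) \<alpha> \<alpha> > 0" if "\<alpha> \<subseteq> {..<n}" for \<alpha>
    using that set_minor_hess_principal_pos[OF hess_det_pos fin]
    by (simp add: minor_toeplitz_hess_eq_set_minor)
  moreover have "minor (toeplitz_hess a n) \<alpha> \<beta> * minor (toeplitz_hess a n) \<beta> \<alpha> \<ge> 0"
    if \<alpha>\<beta>: "\<alpha> \<subseteq> {..<n}" "\<beta> \<subseteq> {..<n}" "card \<alpha> = card \<beta>"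
      "card (\<alpha> \<union> \<beta>) = card \<alpha> + 1"
    for \<alpha> \<beta>
  proof -
    define S where "S = \<alpha> \<union> \<beta>"
    obtain p q where pq: "p \<noteq> q" "p \<in> S" "q \<in> S"
      and \<alpha>: "\<alpha> = S - {q}" and \<beta>: "\<beta> = S - {p}"
      unfolding S_def
      using card_Un_eq_Suc_obtains_delete[OF fin[OF \<alpha>\<beta>(1)] fin[OF \<alpha>\<beta>(2)] \<alpha>\<beta>(3,4)] .
    have "finite S" unfolding S_def using fin \<alpha>\<beta>(1,2) by blast
    have "0 \<le> set_minor (hess_entry a) \<alpha> \<beta> * set_minor (hess_entry a) \<beta> \<alpha>"
      unfolding \<alpha> \<beta>
      by (rule set_minor_hess_almost_principal_pair_nonneg[OF \<open>finite S\<close> pq(2,3,1)])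
    then show ?thesis
      using \<alpha>\<beta> by (simp add: minor_toeplitz_hess_eq_set_minor)
  qed
  ultimately show ?thesis
    unfolding GKK_matrix_def P_matrix_def weakly_sign_symmetric_def dim
    by (simp add: toeplitz_hess_carrier)
qed

end

lemma hess_det_seq_kt_cross:
  assumes "0 < t" "t < 1" "u < v" "v < L"
  shows "hess_det (seq_kt k t) L * hess_det (seq_kt k t) (v - Suc u)
    \<le> hess_det (seq_kt k t) v * hess_det (seq_kt k t) (L - 1 - u)"
proof -
  \<comment> \<open>convexity of \<open>m \<mapsto> (m - k - 1)\<^sub>+\<close>\<close>
  have "(v - k - 1) + (L - 1 - u - k - 1) \<le> (L - k - 1) + (v - Suc u - k - 1)"
    using assms(3,4) by linarith
  then have "t ^ ((L - k - 1) + (v - Suc u - k - 1)) \<le> t ^ ((v - k - 1) + (L - 1 - u - k - 1))"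
    using assms(1,2) by (intro power_decreasing) auto
  then show ?thesis
    unfolding hess_det_seq_kt power_add .
qed

theorem proposition2:
  fixes n k :: nat and t :: real
  assumes "0 < t" and "t < 1"
  shows "GKK_matrix (A_nkt n k t)"
proof -
  interpret gkk_symbol "seq_kt k t"
  proof
    show "hess_det (seq_kt k t) m > 0" for m
      using assms(1) by (simp add: hess_det_seq_kt)
    show "hess_det (seq_kt k t) L * hess_det (seq_kt k t) (v - Suc u)
        \<le> hess_det (seq_kt k t) v * hess_det (seq_kt k t) (L - 1 - u)" if "u < v" "v < L" for L u v
      using hess_det_seq_kt_cross[OF assms that] .
  qed
  show ?thesis
    unfolding A_nkt_def by (rule GKK_matrix_toeplitz_hess)
qed

end
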